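(* Suppose $J_1=J_2=J>0$ and $\Delta<1$. There exists a constant $c\in(0,\infty)$ (independent of $N$, $\theta$, $\Delta$) such that for every configuration $\mathbf S$ of the form $\mathbf S_{\boldsymbol r}=(\cos(\theta+\vartheta_{\boldsymbol r}),\sin(\theta+\vartheta_{\boldsymbol r}))$ with $\vartheta_{\boldsymbol r}\in(-\pi,\pi]$ and $|\mathbf S_{\boldsymbol r}-\boldsymbol e(\theta)|<\Delta$ for all $\boldsymbol r\in\mathbb T_N$, $$\bigl|\mathcal H_N(\mathbf S)+J|\mathbb T_N|-J\,G_{N,\theta}(\boldsymbol\vartheta)\bigr|\le cJ|\mathbb T_N|\Delta^3.$$
   Context: Torus model: $N$ even, $\mathbb T_N=(\mathbb Z/N\mathbb Z)^2$; $\langle \boldsymbol r,\boldsymbol r+\boldsymbol e_1\rangle$ is an $x$-edge if $r_1$ is even, a $z$-edge otherwise; $\langle\boldsymbol r,\boldsymbol r+\boldsymbol e_2\rangle$ is an $x$-edge if $r_2$ is even, a $z$-edge otherwise. $\mathcal H_N(\mathbf S)=-J\sum_{x\text{-edges}}S^x_{\boldsymbol r}S^x_{\boldsymbol r'}-J\sum_{z\text{-edges}}S^z_{\boldsymbol r}S^z_{\boldsymbol r'}$ for unit vectors $\mathbf S_{\boldsymbol r}=(S^x_{\boldsymbol r},S^z_{\boldsymbol r})$. $\boldsymbol e(\theta)=(\cos\theta,\sin\theta)$. For $\boldsymbol\vartheta=(\vartheta_{\boldsymbol r})$, $G_{N,\theta}(\boldsymbol\vartheta)=\frac12\sum_{x\text{-edges}\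 \langle\boldsymbol r,\boldsymbol r'\rangle}(\vartheta_{\boldsymbol r}-\vartheta_{\boldsymbol r'})^2\sin^2\theta+\frac12\sum_{z\text{-edges}\ \langle\boldsymbol r,\boldsymbol r'\rangle}(\vartheta_{\boldsymbol r}-\vartheta_{\boldsymbol r'})^2\cos^2\theta$. *)

theory Defs
  imports "HOL-Analysis.Analysis"
begin

text \<open>Sites of the torus T_N = (Z/NZ)^2, represented by pairs (a,b) with 0 <= a,b < N.\<close>
definition torus :: "nat \<Rightarrow> (nat \<times> nat) set" where
  "torus N = {0..<N} \<times> {0..<N}"

definition step1 :: "nat \<Rightarrow> nat \<times> nat \<Rightarrow> nat \<times> nat" where
  "step1 N r = ((fst r + 1) mod N, snd r)"
definition step2 :: "nat \<Rightarrow> nat \<times> nat \<Rightarrow> nat \<times> nat" where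
  "step2 N r = (fst r, (snd r + 1) mod N)"

text \<open>Unit vector e(theta); a spin is a pair (S^x, S^z).\<close>
definition evec :: "real \<Rightarrow> real \<times> real" where
  "evec \<theta> = (cos \<theta>, sin \<theta>)"

definition spin_config :: "real \<Rightarrow> (nat \<times> nat \<Rightarrow> real) \<Rightarrow> nat \<times> nat \<Rightarrow> real \<times> real" where
  "spin_config \<theta> \<phi> r = (cos (\<theta> + \<phi> r), sin (\<theta> + \<phi> r))"

definition ham :: "nat \<Rightarrow> real \<Rightarrow> (nat \<times> nat \<Rightarrow> real \<times> real) \<Rightarrow> real" where
  "ham N J S =
     - J * (\<Sum>r\<in>torus N.
              (if even (fst r) then fst (S r) * fst (S (step1 N r))
               else snd (S r) * snd (S (step1 N r)))
            + (if even (snd r) then fst (S r) * fst (S (step2 N r))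
               else snd (S r) * snd (S (step2 N r))))"

definition Gform :: "nat \<Rightarrow> real \<Rightarrow> (nat \<times> nat \<Rightarrow> real) \<Rightarrow> real" where
  "Gform N \<theta> \<phi> =
     (1/2) * (\<Sum>r\<in>torus N.
              (if even (fst r) then (\<phi> r - \<phi> (step1 N r))^2 * (sin \<theta>)^2
               else (\<phi> r - \<phi> (step1 N r))^2 * (cos \<theta>)^2)
            + (if even (snd r) then (\<phi> r - \<phi> (step2 N r))^2 * (sin \<theta>)^2
               else (\<phi> r - \<phi> (step2 N r))^2 * (cos \<theta>)^2))"

end

theory Submission
  imports Defs
begin

text \<open>Write each bond product as \<open>x y = (x\<^sup>2 + y\<^sup>2)/2 - (x - y)\<^sup>2/2\<close>. Since \<open>N\<close> is even,
  the bond type alternates along every lattice line, so in each direction every site is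
  the left end of a bond of one type and the right end of a bond of the other; hence the
  diagonal terms add up to \<open>\<Sum>\<^sub>r (cos\<^sup>2 + sin\<^sup>2)/2\<close> per direction, i.e. exactly \<open>|T\<^sub>N|\<close> in total.
  What remains are squared chords such as \<open>(cos(\<theta>+a) - cos(\<theta>+b))\<^sup>2\<close>, which differ from
  \<open>(a-b)\<^sup>2 sin\<^sup>2\<theta>\<close> by \<open>O(\<Delta>\<^sup>3)\<close> because \<open>|S\<^sub>r - e(\<theta>)| < \<Delta>\<close> forces \<open>|\<vartheta>\<^sub>r| < 2\<Delta>\<close>.\<close>

lemma diff_sin_le_cube:
  fixes x :: real
  assumes "0 \<le> x"
  shows "x - sin x \<le> x^3 / 6"
proof -
  let ?f = "\<lambda>x. x^3/6 - x + sin x"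
  have "(?f has_real_derivative u^2/2 - 1 + cos u) (at u)" for u
    by (auto intro!: derivative_eq_intros simp: field_simps)
  moreover have "u^2/2 - 1 + cos u \<ge> 0" for u :: real
  proof -
    have "cos u = 1 - 2 * sin (u/2)^2"
      using cos_double_sin[of "u/2"] by simp
    moreover have "sin (u/2)^2 \<le> (u/2)^2"
      using abs_sin_x_le_abs_x[of "u/2"] by (metis abs_ge_zero power2_abs power_mono)
    ultimately show ?thesis by (simp add: power_divide)
  qed
  ultimately have "?f 0 \<le> ?f x"
    by (intro DERIV_nonneg_imp_nondecreasing[OF assms]) blast
  then show ?thesis by simp
qed

lemma abs_sin_minus_le_cube:
  fixes x :: real
  shows "\<bar>sin x - x\<bar> \<le> \<bar>x\<bar>^3 / 6"
  using diff_sin_le_cube[of x] diff_sin_le_cube[of "-x"] sin_x_le_x[of x] sin_x_le_x[of "-x"]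
  by (cases "x \<ge> 0") auto

lemma sin_ge_half_self:
  fixes x :: real
  assumes "0 \<le> x" "x \<le> pi/3"
  shows "x/2 \<le> sin x"
proof -
  let ?f = "\<lambda>x. sin x - x/2"
  have "(?f has_real_derivative cos u - 1/2) (at u)" for u
    by (auto intro!: derivative_eq_intros)
  moreover have "cos u - 1/2 \<ge> 0" if "0 \<le> u" "u \<le> x" for u
    using cos_monotone_0_pi_le[of u "pi/3"] assms that cos_60 by auto
  ultimately have "?f 0 \<le> ?f x"
    by (intro DERIV_nonneg_imp_nondecreasing[OF assms(1)]) blast
  then show ?thesis by simp
qed

lemma abs_sin_diff_le:
  fixes a b :: real
  shows "\<bar>sin a - sin b\<bar> \<le> \<bar>a - b\<bar>"
proof -
  have "\<bar>sin a - sin b\<bar> = 2 * \<bar>sin ((a - b)/2)\<bar> * \<bar>cos ((a + b)/2)\<bar>"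
    by (simp add: sin_diff_sin abs_mult)
  also have "\<dots> \<le> 2 * \<bar>(a - b)/2\<bar> * 1"
    using abs_sin_x_le_abs_x[of "(a - b)/2"] by (intro mult_mono) auto
  finally show ?thesis by simp
qed

lemma abs_cos_diff_le:
  fixes a b :: real
  shows "\<bar>cos a - cos b\<bar> \<le> \<bar>a - b\<bar>"
proof -
  have "\<bar>cos a - cos b\<bar> = 2 * \<bar>sin ((a + b)/2)\<bar> * \<bar>sin ((b - a)/2)\<bar>"
    by (simp add: cos_diff_cos abs_mult)
  also have "\<dots> \<le> 2 * 1 * \<bar>(b - a)/2\<bar>"
    using abs_sin_x_le_abs_x[of "(b - a)/2"] by (intro mult_mono) auto
  finally show ?thesis by simp
qed

lemma spin_config_eq_evec: "spin_config \<theta> \<phi> r = evec (\<theta> + \<phi> r)"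
  by (simp add: spin_config_def evec_def)

lemma norm_evec_diff: "norm (evec (t + p) - evec t) = 2 * \<bar>sin (p/2)\<bar>"
proof -
  have "(cos (t + p) - cos t)^2 + (sin (t + p) - sin t)^2 = 2 - 2 * cos p"
  proof -
    have "(cos (t + p) - cos t)^2 + (sin (t + p) - sin t)^2
        = (sin p^2 + cos p^2) * (sin t^2 + cos t^2) + (sin t^2 + cos t^2)
          - 2 * cos p * (sin t^2 + cos t^2)"
      unfolding cos_add sin_add power2_eq_square by algebra
    then show ?thesis by simp
  qed
  also have "\<dots> = (2 * \<bar>sin (p/2)\<bar>)^2"
    using cos_double_sin[of "p/2"] by (simp add: power_mult_distrib)
  finally show ?thesis
    by (simp add: evec_def norm_Pair real_sqrt_mult)
qed

lemma abs_angle_lt_of_norm_evec_diff: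
  assumes "p \<in> {-pi<..pi}" "norm (evec (t + p) - evec t) < D" "D < 1"
  shows "\<bar>p\<bar> < 2 * D"
proof -
  have "\<bar>sin (\<bar>p\<bar>/2)\<bar> = \<bar>sin (p/2)\<bar>"
    by (cases "p \<ge> 0") auto
  with assms have small: "sin (\<bar>p\<bar>/2) < 1/2" "sin (\<bar>p\<bar>/2) < D/2"
    by (auto simp: norm_evec_diff)
  have range: "0 \<le> \<bar>p\<bar>/2" "\<bar>p\<bar>/2 \<le> pi/2"
    using assms(1) by auto
  txt \<open>Since \<open>D < 1\<close>, the half-angle lies in \<open>[0, \<pi>/6)\<close>, where \<open>sin\<close> is at least half its argument.\<close>
  have "\<bar>p\<bar>/2 < pi/6"
  proof (rule ccontr)
    assume "\<not> \<bar>p\<bar>/2 < pi/6"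
    then have "sin (pi/6) \<le> sin (\<bar>p\<bar>/2)"
      using range by (intro sin_monotone_2pi_le) auto
    with small sin_30 show False by simp
  qed
  then have "\<bar>p\<bar>/4 \<le> sin (\<bar>p\<bar>/2)"
    using sin_ge_half_self[of "\<bar>p\<bar>/2"] range by auto
  with small show ?thesis by simp
qed

lemma cos_chord_linear_approx:
  fixes t a b :: real
  shows "\<bar>cos (t + a) - cos (t + b) + (a - b) * sin t\<bar>
           \<le> \<bar>a - b\<bar>^3 / 24 + \<bar>a - b\<bar> * \<bar>a + b\<bar> / 2"
proof -
  define d m where "d = a - b" and "m = (a + b)/2"
  have "cos (t + a) - cos (t + b) = - 2 * sin (t + m) * sin (d/2)"
  proof -
    have "(t + a + (t + b))/2 = t + m" "(t + b - (t + a))/2 = - (d/2)"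
      by (simp_all add: d_def m_def field_simps)
    then show ?thesis
      using cos_diff_cos[of "t + a" "t + b"] by (simp only: sin_minus)
  qed
  then have "cos (t + a) - cos (t + b) + d * sin t
      = - 2 * (sin (t + m) * (sin (d/2) - d/2)) - d * (sin (t + m) - sin t)"
    by (simp add: algebra_simps)
  moreover have "\<bar>sin (t + m) * (sin (d/2) - d/2)\<bar> \<le> 1 * (\<bar>d/2\<bar>^3 / 6)"
    unfolding abs_mult by (intro mult_mono abs_sin_minus_le_cube) auto
  moreover have "\<bar>d * (sin (t + m) - sin t)\<bar> \<le> \<bar>d\<bar> * \<bar>m\<bar>"
    using abs_sin_diff_le[of "t + m" t] by (simp add: abs_mult mult_left_mono)
  ultimately have "\<bar>cos (t + a) - cos (t + b) + d * sin t\<bar> \<le> 2 * (\<bar>d/2\<bar>^3 / 6) + \<bar>d\<bar> * \<bar>m\<bar>"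
    by (smt (verit))
  also have "\<dots> = \<bar>d\<bar>^3 / 24 + \<bar>d\<bar> * \<bar>a + b\<bar> / 2"
    by (simp add: m_def power_divide)
  finally show ?thesis by (simp add: d_def)
qed

lemma cos_chord_sq_approx:
  fixes t a b D :: real
  assumes "\<bar>a\<bar> < 2 * D" "\<bar>b\<bar> < 2 * D" "D < 1"
  shows "\<bar>(cos (t + a) - cos (t + b))^2 - (a - b)^2 * (sin t)^2\<bar> \<le> 88 * D^3"
proof -
  define u v where "u = cos (t + a) - cos (t + b)" and "v = (a - b) * sin t"
  have D: "0 < D" using assms by linarith
  have d: "\<bar>a - b\<bar> \<le> 4 * D" "\<bar>a + b\<bar> \<le> 4 * D"
    using assms by linarith+
  have "\<bar>u + v\<bar> \<le> \<bar>a - b\<bar>^3 / 24 + \<bar>a - b\<bar> * \<bar>a + b\<bar> / 2"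
    unfolding u_def v_def by (rule cos_chord_linear_approx)
  also have "\<dots> \<le> (4 * D)^3 / 24 + (4 * D) * (4 * D) / 2"
    using d by (intro add_mono divide_right_mono mult_mono power_mono) auto
  also have "\<dots> \<le> 11 * D^2"
    using D assms(3) by (simp add: power2_eq_square power3_eq_cube)
  finally have sum: "\<bar>u + v\<bar> \<le> 11 * D^2" .
  have "\<bar>u\<bar> \<le> \<bar>a - b\<bar>" "\<bar>v\<bar> \<le> \<bar>a - b\<bar>"
    using abs_cos_diff_le[of "t + a" "t + b"] by (auto simp: u_def v_def abs_mult mult_left_le)
  with d have diff: "\<bar>u - v\<bar> \<le> 8 * D" by linarith
  have "\<bar>u^2 - v^2\<bar> = \<bar>u + v\<bar> * \<bar>u - v\<bar>"
    by (simp add: power2_eq_square algebra_simps flip: abs_mult)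
  also have "\<dots> \<le> (11 * D^2) * (8 * D)"
    using sum diff by (intro mult_mono) auto
  also have "\<dots> = 88 * D^3"
    by (simp add: power2_eq_square power3_eq_cube)
  finally show ?thesis
    by (simp add: u_def v_def power_mult_distrib)
qed

lemma sin_chord_sq_approx:
  fixes t a b D :: real
  assumes "\<bar>a\<bar> < 2 * D" "\<bar>b\<bar> < 2 * D" "D < 1"
  shows "\<bar>(sin (t + a) - sin (t + b))^2 - (a - b)^2 * (cos t)^2\<bar> \<le> 88 * D^3"
proof -
  have "cos (t - pi/2 + x) = sin (t + x)" for x
    by (simp add: cos_diff sin_add cos_add algebra_simps)
  moreover have "sin (t - pi/2)^2 = cos t^2"
    by (simp add: sin_diff)
  ultimately show ?thesis
    using cos_chord_sq_approx[OF assms, of "t - pi/2"] by simp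
qed

definition bond_energy :: "('s \<Rightarrow> bool) \<Rightarrow> ('s \<Rightarrow> 's) \<Rightarrow> ('s \<Rightarrow> real \<times> real) \<Rightarrow> 's \<Rightarrow> real" where
  "bond_energy p \<sigma> S r =
     (if p r then fst (S r) * fst (S (\<sigma> r)) else snd (S r) * snd (S (\<sigma> r)))"

definition bond_stiffness :: "('s \<Rightarrow> bool) \<Rightarrow> ('s \<Rightarrow> 's) \<Rightarrow> real \<Rightarrow> ('s \<Rightarrow> real) \<Rightarrow> 's \<Rightarrow> real" where
  "bond_stiffness p \<sigma> \<theta> \<phi> r =
     (if p r then (\<phi> r - \<phi> (\<sigma> r))^2 * (sin \<theta>)^2 else (\<phi> r - \<phi> (\<sigma> r))^2 * (cos \<theta>)^2)"

lemma ham_eq_bond_sum: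
  "ham N J S = - J * (\<Sum>r\<in>torus N. bond_energy (\<lambda>r. even (fst r)) (step1 N) S r
                                  + bond_energy (\<lambda>r. even (snd r)) (step2 N) S r)"
  by (simp add: ham_def bond_energy_def)

lemma Gform_eq_bond_sum:
  "Gform N \<theta> \<phi> = (\<Sum>r\<in>torus N. bond_stiffness (\<lambda>r. even (fst r)) (step1 N) \<theta> \<phi> r
                                + bond_stiffness (\<lambda>r. even (snd r)) (step2 N) \<theta> \<phi> r) / 2"
  by (simp add: Gform_def bond_stiffness_def)

lemma step1_bij: "0 < N \<Longrightarrow> bij_betw (step1 N) (torus N) (torus N)"
  unfolding bij_betw_def
  by (intro conjI endo_inj_surj)
     (auto simp: inj_on_def step1_def torus_def mod_if split: if_splits)

lemma step2_bij: "0 < N \<Longrightarrow> bij_betw (step2 N) (torus N) (torus N)"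
  unfolding bij_betw_def
  by (intro conjI endo_inj_surj)
     (auto simp: inj_on_def step2_def torus_def mod_if split: if_splits)

lemma even_fst_step1: "even N \<Longrightarrow> r \<in> torus N \<Longrightarrow> even (fst (step1 N r)) \<longleftrightarrow> odd (fst r)"
  by (auto simp: step1_def torus_def mod_Suc)

lemma even_snd_step2: "even N \<Longrightarrow> r \<in> torus N \<Longrightarrow> even (snd (step2 N r)) \<longleftrightarrow> odd (snd r)"
  by (auto simp: step2_def torus_def mod_Suc)

lemma sum_if_swap_bij:
  fixes f g :: "'s \<Rightarrow> 'a::comm_monoid_add"
  assumes "bij_betw \<sigma> T T" "\<And>r. r \<in> T \<Longrightarrow> p (\<sigma> r) \<longleftrightarrow> \<not> p r"
  shows "(\<Sum>r\<in>T. if p r then f (\<sigma> r) else g (\<sigma> r)) = (\<Sum>r\<in>T. if p r then g r else f r)"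
proof -
  have "(\<Sum>r\<in>T. if p r then f (\<sigma> r) else g (\<sigma> r))
      = (\<Sum>r\<in>T. (\<lambda>x. if p x then g x else f x) (\<sigma> r))"
    using assms(2) by (intro sum.cong) auto
  also have "\<dots> = (\<Sum>r\<in>T. if p r then g r else f r)"
    by (rule sum.reindex_bij_betw[OF assms(1)])
  finally show ?thesis .
qed

lemma bond_energy_sum:
  assumes "bij_betw \<sigma> T T" "\<And>r. r \<in> T \<Longrightarrow> p (\<sigma> r) \<longleftrightarrow> \<not> p r"
    and unit: "\<And>r. r \<in> T \<Longrightarrow> fst (S r)^2 + snd (S r)^2 = 1"
  shows "(\<Sum>r\<in>T. bond_energy p \<sigma> S r) = real (card T) / 2
           - (\<Sum>r\<in>T. if p r then (fst (S r) - fst (S (\<sigma> r)))^2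
                         else (snd (S r) - snd (S (\<sigma> r)))^2) / 2"
proof -
  define X Y where "X r = fst (S r)" and "Y r = snd (S r)" for r
  define chord where "chord r = (if p r then (X r - X (\<sigma> r))^2 else (Y r - Y (\<sigma> r))^2)" for r
  have prod: "x * y = x^2/2 + y^2/2 - (x - y)^2/2" for x y :: real
    by (simp add: power2_eq_square field_simps)
  have "(\<Sum>r\<in>T. bond_energy p \<sigma> S r)
      = (\<Sum>r\<in>T. if p r then X r^2/2 else Y r^2/2)
        + (\<Sum>r\<in>T. if p r then X (\<sigma> r)^2/2 else Y (\<sigma> r)^2/2) - (\<Sum>r\<in>T. chord r / 2)"
    unfolding sum.distrib[symmetric] sum_subtractf[symmetric]
    by (intro sum.cong) (auto simp: bond_energy_def chord_def X_def Y_def prod)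
  also have "(\<Sum>r\<in>T. if p r then X (\<sigma> r)^2/2 else Y (\<sigma> r)^2/2)
           = (\<Sum>r\<in>T. if p r then Y r^2/2 else X r^2/2)"
    by (rule sum_if_swap_bij[where p = p, OF assms(1,2)])
  also have "(\<Sum>r\<in>T. if p r then X r^2/2 else Y r^2/2) + \<dots> = (\<Sum>r\<in>T. 1/2)"
    unfolding sum.distrib[symmetric] using unit by (intro sum.cong) (auto simp: X_def Y_def add.commute)
  finally show ?thesis
    unfolding chord_def X_def Y_def by (simp add: sum_divide_distrib)
qed

lemma bond_energy_sum_approx:
  assumes "bij_betw \<sigma> T T" "\<And>r. r \<in> T \<Longrightarrow> p (\<sigma> r) \<longleftrightarrow> \<not> p r"
    and small: "\<And>r. r \<in> T \<Longrightarrow> \<bar>\<phi> r\<bar> < 2 * \<Delta>" and "\<Delta> < 1"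
  shows "\<bar>real (card T) / 2 - (\<Sum>r\<in>T. bond_energy p \<sigma> (spin_config \<theta> \<phi>) r)
            - (\<Sum>r\<in>T. bond_stiffness p \<sigma> \<theta> \<phi> r) / 2\<bar> \<le> 44 * real (card T) * \<Delta>^3"
proof -
  let ?S = "spin_config \<theta> \<phi>"
  define chord where "chord r = (if p r then (fst (?S r) - fst (?S (\<sigma> r)))^2
                                   else (snd (?S r) - snd (?S (\<sigma> r)))^2)" for r
  have "\<bar>chord r - bond_stiffness p \<sigma> \<theta> \<phi> r\<bar> \<le> 88 * \<Delta>^3" if "r \<in> T" for r
  proof -
    have "\<bar>\<phi> r\<bar> < 2 * \<Delta>" "\<bar>\<phi> (\<sigma> r)\<bar> < 2 * \<Delta>"
      using small bij_betwE[OF assms(1)] that by blast+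
    then show ?thesis
      using cos_chord_sq_approx sin_chord_sq_approx \<open>\<Delta> < 1\<close>
      by (simp add: chord_def bond_stiffness_def spin_config_def)
  qed
  then have "\<bar>(\<Sum>r\<in>T. chord r - bond_stiffness p \<sigma> \<theta> \<phi> r)\<bar> \<le> (\<Sum>r\<in>T. 88 * \<Delta>^3)"
    by (intro order_trans[OF sum_abs sum_mono])
  moreover have "(\<Sum>r\<in>T. bond_energy p \<sigma> ?S r) = real (card T) / 2 - (\<Sum>r\<in>T. chord r) / 2"
    unfolding chord_def
    by (rule bond_energy_sum[where p = p, OF assms(1,2)]) (auto simp: spin_config_def)
  ultimately show ?thesis
    by (simp add: sum_subtractf)
qed

theorem lemma4p4:
  shows "\<exists>c::real. 0 < c \<and>
    (\<forall>(N::nat) (J::real) (\<theta>::real) (\<Delta>::real) (\<phi>::nat \<times> nat \<Rightarrow> real).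
       even N \<and> 0 < N \<and> 0 < J \<and> \<Delta> < 1 \<and>
       (\<forall>r\<in>torus N. \<phi> r \<in> {-pi<..pi} \<and>
                      norm (spin_config \<theta> \<phi> r - evec \<theta>) < \<Delta>)
       \<longrightarrow> \<bar>ham N J (spin_config \<theta> \<phi>) + J * real (card (torus N))
             - J * Gform N \<theta> \<phi>\<bar>
           \<le> c * J * real (card (torus N)) * \<Delta>^3)"
proof (intro exI[of _ 88] conjI allI impI)
  show "(0::real) < 88" by simp
next
  fix N :: nat and J \<theta> \<Delta> :: real and \<phi> :: "nat \<times> nat \<Rightarrow> real"
  assume "even N \<and> 0 < N \<and> 0 < J \<and> \<Delta> < 1 \<and> (\<forall>r\<in>torus N. \<phi> r \<in> {-pi<..pi} \<and>
            norm (spin_config \<theta> \<phi> r - evec \<theta>) < \<Delta>)"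
  then have N: "even N" "0 < N" and J: "0 < J" and "\<Delta> < 1"
    and "\<And>r. r \<in> torus N \<Longrightarrow> \<phi> r \<in> {-pi<..pi} \<and> norm (evec (\<theta> + \<phi> r) - evec \<theta>) < \<Delta>"
    by (auto simp: spin_config_eq_evec)
  then have small: "\<bar>\<phi> r\<bar> < 2 * \<Delta>" if "r \<in> torus N" for r
    using abs_angle_lt_of_norm_evec_diff that by blast
  let ?T = "real (card (torus N))"
  let ?err = "\<lambda>p \<sigma>. ?T/2 - (\<Sum>r\<in>torus N. bond_energy p \<sigma> (spin_config \<theta> \<phi>) r)
                      - (\<Sum>r\<in>torus N. bond_stiffness p \<sigma> \<theta> \<phi> r) / 2"
  have "\<bar>?err (\<lambda>r. even (fst r)) (step1 N)\<bar> \<le> 44 * ?T * \<Delta>^3"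
    using step1_bij[OF N(2)] even_fst_step1[OF N(1)] small \<open>\<Delta> < 1\<close>
    by (rule bond_energy_sum_approx)
  moreover have "\<bar>?err (\<lambda>r. even (snd r)) (step2 N)\<bar> \<le> 44 * ?T * \<Delta>^3"
    using step2_bij[OF N(2)] even_snd_step2[OF N(1)] small \<open>\<Delta> < 1\<close>
    by (rule bond_energy_sum_approx)
  moreover have "ham N J (spin_config \<theta> \<phi>) + J * ?T - J * Gform N \<theta> \<phi>
      = J * (?err (\<lambda>r. even (fst r)) (step1 N) + ?err (\<lambda>r. even (snd r)) (step2 N))"
    by (simp add: ham_eq_bond_sum Gform_eq_bond_sum sum.distrib algebra_simps)
  ultimately show "\<bar>ham N J (spin_config \<theta> \<phi>) + J * ?T - J * Gform N \<theta> \<phi>\<bar>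
      \<le> 88 * J * ?T * \<Delta>^3"
    using J by (simp add: abs_mult)
qed

end
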